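(* Let $(\varphi_\alpha)_{\alpha>0}$ be a non-linear regularizing filter satisfying Assumption B. Let $z\in\operatorname{ran}(\mathbf{M}_\kappa)\cap\operatorname{ran}(\Phi_{\tilde\alpha,\kappa})$ for some $\tilde\alpha>0$. Let $\delta_k\to0$, $\alpha_k\to0$ be positive sequences for which there is a constant $C>0$ with $\delta_k^2\le C\alpha_k$ for all $k$, and let $z^k\in\ell^2(\Lambda)$ with $\|z-z^k\|_2\le\delta_k$. Then $\mathbf{M}_\kappa^+\circ\Phi_{\alpha_k,\kappa}(z^k)\rightharpoonup\mathbf{M}_\kappa^+z$ weakly as $k\to\infty$.
   Context: $\Lambda$ is an at most countable index set and $\kappa=(\kappa_\lambda)_{\lambda\in\Lambda}\in(0,\infty)^\Lambda$ with $\sup_\lambda\kappa_\lambda<\infty$. $\mathbf{M}_\kappa\colon\ell^2(\Lambda)\to\ell^2(\Lambda)$, $(x_\lambda)\mapsto(\kappa_\lambda x_\lambda)$; $\mathbf{M}_\kappa^+$ is its Moore–Penrose inverse, with domain $\operatorname{ran}(\mathbf{M}_\kappa)=\{(c_\lambda)\in\ell^2:(c_\lambda/\kappa_\lambda)\in\ell^2\}$ and $\mathbf{M}_\kappa^+((c_\lambda))=(c_\lambda/\kappa_\lambda)$. A non-linear regularizing filter is a family $(\varphi_\alpha)_{\alpha>0}$ of functions $\varphi_\alpha\colon(0,\infty)\times\mathbb{R}\to\mathbb{R}$ such that for all $\alpha,\kappa>0$: (F1) $\varphi_\alpha(\kappa,\cdot)$ is non-decreasing; (F2) $\varphi_\alpha(\kappa,\cdot)$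 is 1-Lipschitz; (F3) $\varphi_\alpha(\kappa,0)=0$; (F4) $\lim_{\alpha\to0}\varphi_\alpha(\kappa,c)=c$ for all $c\in\mathbb{R}$. $\Phi_{\alpha,\kappa}\colon\ell^2(\Lambda)\to\ell^2(\Lambda)$, $(c_\lambda)\mapsto(\varphi_\alpha(\kappa_\lambda,c_\lambda))_\lambda$. Assumption B: (B1) for all $\kappa>0$ and $x\in\mathbb{R}$, $(|\varphi_\alpha(\kappa,x)|)_{\alpha>0}$ is monotonically increasing as $\alpha\downarrow0$; (B2) there exist $d,e>0$ such that for all $\kappa,\alpha>0$, $x\in\mathbb{R}$: $|x|\le d\alpha/\kappa\Rightarrow|\varphi_\alpha(\kappa,x)|\le\frac{e\kappa}{\sqrt\alpha}|x|$. *)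

theory Defs
  imports "HOL-Analysis.Analysis"
begin

definition l2 :: "('a \<Rightarrow> real) set" where
  "l2 = {x. (\<lambda>l. (x l)\<^sup>2) summable_on UNIV}"

definition l2_inner :: "('a \<Rightarrow> real) \<Rightarrow> ('a \<Rightarrow> real) \<Rightarrow> real" where
  "l2_inner x y = (\<Sum>\<^sub>\<infinity>l. x l * y l)"

definition l2_norm :: "('a \<Rightarrow> real) \<Rightarrow> real" where
  "l2_norm x = sqrt (\<Sum>\<^sub>\<infinity>l. (x l)\<^sup>2)"

definition weak_conv_l2 :: "(nat \<Rightarrow> 'a \<Rightarrow> real) \<Rightarrow> ('a \<Rightarrow> real) \<Rightarrow> bool" where
  "weak_conv_l2 xs x \<longleftrightarrow>
     (\<forall>y\<in>l2. (\<lambda>k. l2_inner (xs k) y) \<longlonglongrightarrow> l2_inner x y)"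

text \<open>Diagonal operator M_kappa and its range; Moore-Penrose inverse on its range.\<close>
definition M_op :: "('a \<Rightarrow> real) \<Rightarrow> ('a \<Rightarrow> real) \<Rightarrow> ('a \<Rightarrow> real)" where
  "M_op \<kappa> x = (\<lambda>l. \<kappa> l * x l)"

definition M_pinv :: "('a \<Rightarrow> real) \<Rightarrow> ('a \<Rightarrow> real) \<Rightarrow> ('a \<Rightarrow> real)" where
  "M_pinv \<kappa> c = (\<lambda>l. c l / \<kappa> l)"

definition Phi_op :: "(real \<Rightarrow> real \<Rightarrow> real \<Rightarrow> real) \<Rightarrow> real \<Rightarrow> ('a \<Rightarrow> real)
     \<Rightarrow> ('a \<Rightarrow> real) \<Rightarrow> ('a \<Rightarrow> real)" where
  "Phi_op \<phi> \<alpha> \<kappa> c = (\<lambda>l. \<phi> \<alpha> (\<kappa> l) (c l))"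

definition nonlinear_reg_filter :: "(real \<Rightarrow> real \<Rightarrow> real \<Rightarrow> real) \<Rightarrow> bool" where
  "nonlinear_reg_filter \<phi> \<longleftrightarrow>
     (\<forall>\<alpha>>0. \<forall>\<kappa>>0.
        mono (\<phi> \<alpha> \<kappa>) \<and>
        (\<forall>x y. \<bar>\<phi> \<alpha> \<kappa> x - \<phi> \<alpha> \<kappa> y\<bar> \<le> \<bar>x - y\<bar>) \<and>
        \<phi> \<alpha> \<kappa> 0 = 0) \<and>
     (\<forall>\<kappa>>0. \<forall>c. ((\<lambda>\<alpha>. \<phi> \<alpha> \<kappa> c) \<longlongrightarrow> c) (at_right 0))"

definition assumption_B :: "(real \<Rightarrow> real \<Rightarrow> real \<Rightarrow> real) \<Rightarrow> bool" where
  "assumption_B \<phi> \<longleftrightarrow>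
     (\<forall>\<kappa>>0. \<forall>x. \<forall>\<alpha> \<beta>. 0 < \<alpha> \<and> \<alpha> \<le> \<beta> \<longrightarrow> \<bar>\<phi> \<beta> \<kappa> x\<bar> \<le> \<bar>\<phi> \<alpha> \<kappa> x\<bar>) \<and>
     (\<exists>d>0. \<exists>e>0. \<forall>\<kappa>>0. \<forall>\<alpha>>0. \<forall>x.
        \<bar>x\<bar> \<le> d * \<alpha> / \<kappa> \<longrightarrow> \<bar>\<phi> \<alpha> \<kappa> x\<bar> \<le> e * \<kappa> / sqrt \<alpha> * \<bar>x\<bar>)"

end

theory Submission
  imports Defs
begin

text \<open>
  Let \<open>x\<^sub>k = M\<^sup>+ \<Phi>\<^sub>\<alpha>\<^sub>k(z\<^sup>k)\<close>. By (F2) and (F4) each component of \<open>x\<^sub>k\<close>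
  converges to \<open>z\<^sub>l / \<kappa>\<^sub>l\<close>, and in \<open>\<ell>\<^sup>2\<close> componentwise convergence of a bounded
  sequence is weak convergence. For the bound, fix a component and let \<open>h = z\<^sup>k\<^sub>l - z\<^sub>l\<close>.
  If \<open>|z\<^sup>k\<^sub>l| \<le> 2|h|\<close>, monotonicity traps \<open>\<phi>(z\<^sup>k\<^sub>l)\<close> between \<open>\<phi>(\<plusminus>2|h|)\<close>, and
  (B2) for small arguments, the 1-Lipschitz bound for large ones, give
  \<open>|\<phi>(\<plusminus>2|h|)/\<kappa>\<^sub>l|\<^sup>2 \<le> 4h\<^sup>2 (e\<^sup>2/\<alpha> + 4\<delta>\<^sup>2/(d\<^sup>2\<alpha>\<^sup>2))\<close>. Otherwise \<open>|z\<^sup>k\<^sub>l| < 2|z\<^sub>l|\<close>,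
  so \<open>|\<phi>(z\<^sup>k\<^sub>l)/\<kappa>\<^sub>l| \<le> 2|z\<^sub>l/\<kappa>\<^sub>l|\<close>. Summing over \<open>l\<close> with
  \<open>\<parallel>z - z\<^sup>k\<parallel> \<le> \<delta>\<^sub>k\<close> and \<open>\<delta>\<^sub>k\<^sup>2 \<le> C \<alpha>\<^sub>k\<close> bounds \<open>\<parallel>x\<^sub>k\<parallel>\<^sup>2\<close> independently of \<open>k\<close>.
\<close>

lemma summable_on_real_bound:
  fixes f g :: "'a \<Rightarrow> real"
  assumes "g summable_on A" and "\<And>x. x \<in> A \<Longrightarrow> \<bar>f x\<bar> \<le> g x"
  shows "f summable_on A"
proof -
  have "(\<lambda>x. norm (g x)) summable_on A"
    using assms(1) summable_on_iff_abs_summable_on_real by blast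
  then have "(\<lambda>x. norm (f x)) summable_on A"
    by (rule Infinite_Sum.abs_summable_on_comparison_test) (use assms(2) in fastforce)
  then show ?thesis
    using summable_on_iff_abs_summable_on_real by blast
qed

lemma abs_mult_le_weighted_squares:
  fixes a b t :: real
  assumes "t > 0"
  shows "\<bar>a * b\<bar> \<le> t / 2 * a\<^sup>2 + b\<^sup>2 / (2 * t)"
proof -
  have "0 \<le> (t * \<bar>a\<bar> - \<bar>b\<bar>)\<^sup>2" by simp
  then have "2 * t * \<bar>a * b\<bar> \<le> t\<^sup>2 * a\<^sup>2 + b\<^sup>2"
    by (simp add: power2_eq_square algebra_simps abs_mult)
  with assms show ?thesis
    by (simp add: field_simps power2_eq_square)
qed

lemma summable_on_mult_square_summable:
  fixes u v :: "'a \<Rightarrow> real"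
  assumes "(\<lambda>l. (u l)\<^sup>2) summable_on A" and "(\<lambda>l. (v l)\<^sup>2) summable_on A"
  shows "(\<lambda>l. u l * v l) summable_on A"
proof (rule summable_on_real_bound)
  show "(\<lambda>l. (u l)\<^sup>2 + (v l)\<^sup>2) summable_on A"
    using assms by (rule summable_on_add)
  show "\<bar>u l * v l\<bar> \<le> (u l)\<^sup>2 + (v l)\<^sup>2" for l
    using abs_mult_le_weighted_squares[of 1 "u l" "v l"] by simp
qed

lemma
  fixes u v :: "'a \<Rightarrow> real"
  assumes u: "(\<lambda>l. (u l)\<^sup>2) summable_on UNIV" and v: "(\<lambda>l. (v l)\<^sup>2) summable_on UNIV"
  shows summable_on_diff_square: "(\<lambda>l. (u l - v l)\<^sup>2) summable_on UNIV"
    and infsum_diff_square_le: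
      "(\<Sum>\<^sub>\<infinity>l. (u l - v l)\<^sup>2) \<le> 2 * (\<Sum>\<^sub>\<infinity>l. (u l)\<^sup>2) + 2 * (\<Sum>\<^sub>\<infinity>l. (v l)\<^sup>2)"
proof -
  have bound_summable: "(\<lambda>l. 2 * (u l)\<^sup>2 + 2 * (v l)\<^sup>2) summable_on UNIV"
    using u v by (intro summable_on_add summable_on_cmult_right)
  have le: "(u l - v l)\<^sup>2 \<le> 2 * (u l)\<^sup>2 + 2 * (v l)\<^sup>2" for l
    using zero_le_square[of "u l + v l"] by (simp add: power2_eq_square algebra_simps)
  show diff_summable: "(\<lambda>l. (u l - v l)\<^sup>2) summable_on UNIV"
    by (rule summable_on_real_bound[OF bound_summable]) (use le in auto)
  have "(\<Sum>\<^sub>\<infinity>l. (u l - v l)\<^sup>2) \<le> (\<Sum>\<^sub>\<infinity>l. 2 * (u l)\<^sup>2 + 2 * (v l)\<^sup>2)"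
    using le by (intro infsum_mono diff_summable bound_summable)
  also have "\<dots> = 2 * (\<Sum>\<^sub>\<infinity>l. (u l)\<^sup>2) + 2 * (\<Sum>\<^sub>\<infinity>l. (v l)\<^sup>2)"
    using u v by (simp add: infsum_add summable_on_cmult_right infsum_cmult_right)
  finally show "(\<Sum>\<^sub>\<infinity>l. (u l - v l)\<^sup>2) \<le> 2 * (\<Sum>\<^sub>\<infinity>l. (u l)\<^sup>2) + 2 * (\<Sum>\<^sub>\<infinity>l. (v l)\<^sup>2)" .
qed

lemma abs_infsum_mult_le_weighted_squares:
  fixes u v :: "'a \<Rightarrow> real"
  assumes u: "(\<lambda>l. (u l)\<^sup>2) summable_on A" and v: "(\<lambda>l. (v l)\<^sup>2) summable_on A"
    and "t > 0"
  shows "\<bar>\<Sum>\<^sub>\<infinity>l\<in>A. u l * v l\<bar> \<le> t / 2 * (\<Sum>\<^sub>\<infinity>l\<in>A. (u l)\<^sup>2) + (\<Sum>\<^sub>\<infinity>l\<in>A. (v l)\<^sup>2) / (2 * t)"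
proof -
  have u': "(\<lambda>l. t / 2 * (u l)\<^sup>2) summable_on A" and v': "(\<lambda>l. (v l)\<^sup>2 / (2 * t)) summable_on A"
    using summable_on_cmult_right[OF u, of "t / 2"] summable_on_cmult_left[OF v, of "1 / (2 * t)"]
    by simp_all
  have "(\<lambda>l. \<bar>u l * v l\<bar>) summable_on A"
    using summable_on_iff_abs_summable_on_real[THEN iffD1, OF summable_on_mult_square_summable[OF u v]]
    by simp
  then have "\<bar>\<Sum>\<^sub>\<infinity>l\<in>A. u l * v l\<bar> \<le> (\<Sum>\<^sub>\<infinity>l\<in>A. \<bar>u l * v l\<bar>)"
    using norm_infsum_bound[of "\<lambda>l. u l * v l" A] by simp
  also have "\<dots> \<le> (\<Sum>\<^sub>\<infinity>l\<in>A. t / 2 * (u l)\<^sup>2 + (v l)\<^sup>2 / (2 * t))"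
    using abs_mult_le_weighted_squares[OF \<open>t > 0\<close>]
    by (intro infsum_mono \<open>(\<lambda>l. \<bar>u l * v l\<bar>) summable_on A\<close> summable_on_add[OF u' v'])
  also have "\<dots> = t / 2 * (\<Sum>\<^sub>\<infinity>l\<in>A. (u l)\<^sup>2) + (\<Sum>\<^sub>\<infinity>l\<in>A. (v l)\<^sup>2) / (2 * t)"
    using infsum_add[OF u' v'] infsum_cmult_right[OF u, of "t / 2"] infsum_cmult_left[OF v, of "1 / (2 * t)"]
    by simp
  finally show ?thesis .
qed

lemma square_summable_tail_small:
  fixes y :: "'a \<Rightarrow> real"
  assumes y: "(\<lambda>l. (y l)\<^sup>2) summable_on UNIV" and "\<eta> > 0"
  obtains F where "finite F" and "(\<Sum>\<^sub>\<infinity>l\<in>-F. (y l)\<^sup>2) \<le> \<eta>"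
proof -
  obtain F where F: "finite F" "dist (\<Sum>l\<in>F. (y l)\<^sup>2) (\<Sum>\<^sub>\<infinity>l. (y l)\<^sup>2) \<le> \<eta>"
    using infsum_finite_approximation[OF y \<open>\<eta> > 0\<close>] by blast
  have "(\<Sum>\<^sub>\<infinity>l. (y l)\<^sup>2) = (\<Sum>\<^sub>\<infinity>l\<in>F \<union> -F. (y l)\<^sup>2)"
    by simp
  also have "\<dots> = (\<Sum>l\<in>F. (y l)\<^sup>2) + (\<Sum>\<^sub>\<infinity>l\<in>-F. (y l)\<^sup>2)"
    using F(1) y by (subst infsum_Un_disjoint) (auto intro: summable_on_subset)
  finally show ?thesis
    using that F by (simp add: dist_real_def)
qed

lemma l2_diff: "x \<in> l2 \<Longrightarrow> y \<in> l2 \<Longrightarrow> (\<lambda>l. x l - y l) \<in> l2"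
  unfolding l2_def by (simp add: summable_on_diff_square)

lemma
  fixes x :: "'a \<Rightarrow> real"
  assumes "x \<in> l2" and "l2_norm x \<le> r"
  shows infsum_square_le_of_l2_norm_le: "(\<Sum>\<^sub>\<infinity>l. (x l)\<^sup>2) \<le> r\<^sup>2"
    and square_le_of_l2_norm_le: "(x l)\<^sup>2 \<le> r\<^sup>2"
proof -
  have "0 \<le> (\<Sum>\<^sub>\<infinity>l. (x l)\<^sup>2)"
    by (rule infsum_nonneg) simp
  with \<open>l2_norm x \<le> r\<close> show total: "(\<Sum>\<^sub>\<infinity>l. (x l)\<^sup>2) \<le> r\<^sup>2"
    unfolding l2_norm_def by (metis sqrt_le_D)
  have "(\<Sum>l'\<in>{l}. (x l')\<^sup>2) \<le> (\<Sum>\<^sub>\<infinity>l. (x l)\<^sup>2)"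
    using \<open>x \<in> l2\<close> unfolding l2_def by (intro finite_sum_le_infsum) auto
  with total show "(x l)\<^sup>2 \<le> r\<^sup>2"
    by simp
qed

lemma l2_norm_diff_tendsto_imp_pointwise:
  assumes "z \<in> l2" and "\<And>k. zk k \<in> l2" and "\<And>k. l2_norm (\<lambda>l. z l - zk k l) \<le> \<delta> k"
    and "\<delta> \<longlonglongrightarrow> 0"
  shows "(\<lambda>k. zk k l) \<longlonglongrightarrow> z l"
proof -
  have "(\<lambda>k. z l - zk k l) \<longlonglongrightarrow> 0"
  proof (rule Lim_null_comparison[OF always_eventually \<open>\<delta> \<longlonglongrightarrow> 0\<close>], intro allI)
    fix k
    have "\<bar>z l - zk k l\<bar> \<le> \<bar>\<delta> k\<bar>"
      using square_le_of_l2_norm_le[OF l2_diff[OF assms(1,2)] assms(3)] by (simp add: abs_le_square_iff)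
    moreover have "0 \<le> \<delta> k"
      using assms(3)[of k] unfolding l2_norm_def by (rule order_trans[rotated]) (simp add: infsum_nonneg)
    ultimately show "norm (z l - zk k l) \<le> \<delta> k"
      by simp
  qed
  from tendsto_diff[OF tendsto_const[of "z l"] this] show ?thesis
    by simp
qed

lemma infsum_mult_tendsto_zero:
  fixes D :: "nat \<Rightarrow> 'a \<Rightarrow> real" and y :: "'a \<Rightarrow> real"
  assumes pointwise: "\<And>l. (\<lambda>k. D k l) \<longlonglongrightarrow> 0"
    and D_summable: "\<And>k. (\<lambda>l. (D k l)\<^sup>2) summable_on UNIV"
    and D_bounded: "\<And>k. (\<Sum>\<^sub>\<infinity>l. (D k l)\<^sup>2) \<le> B"
    and y: "(\<lambda>l. (y l)\<^sup>2) summable_on UNIV"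
  shows "(\<lambda>k. \<Sum>\<^sub>\<infinity>l. D k l * y l) \<longlonglongrightarrow> 0"
proof (rule LIMSEQ_I)
  fix \<epsilon> :: real
  assume "\<epsilon> > 0"
  have "B \<ge> 0"
    using D_bounded[of 0] infsum_nonneg[of UNIV "\<lambda>l. (D 0 l)\<^sup>2"] by simp
  define t where "t = \<epsilon> / (2 * (B + 1))"
  have "t > 0" and tB: "t / 2 * B < \<epsilon> / 4"
    unfolding t_def using \<open>\<epsilon> > 0\<close> \<open>B \<ge> 0\<close> by (simp_all add: field_simps)
  obtain F where "finite F" and y_tail: "(\<Sum>\<^sub>\<infinity>l\<in>-F. (y l)\<^sup>2) \<le> t * \<epsilon> / 2"
    using square_summable_tail_small[OF y, of "t * \<epsilon> / 2"] \<open>t > 0\<close> \<open>\<epsilon> > 0\<close> by auto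
  have "(\<lambda>k. \<Sum>l\<in>F. D k l * y l) \<longlonglongrightarrow> (\<Sum>l\<in>F. 0 * y l)"
    by (intro tendsto_sum tendsto_mult pointwise tendsto_const)
  then have "\<exists>N. \<forall>k\<ge>N. norm ((\<Sum>l\<in>F. D k l * y l) - 0) < \<epsilon> / 2"
    using \<open>\<epsilon> > 0\<close> by (intro LIMSEQ_D) simp_all
  then obtain N where head: "\<And>k. k \<ge> N \<Longrightarrow> \<bar>\<Sum>l\<in>F. D k l * y l\<bar> < \<epsilon> / 2"
    by auto
  have tail: "\<bar>\<Sum>\<^sub>\<infinity>l\<in>-F. D k l * y l\<bar> < \<epsilon> / 2" for k
  proof -
    have D_tail: "(\<lambda>l. (D k l)\<^sup>2) summable_on -F" and y_tail_summable: "(\<lambda>l. (y l)\<^sup>2) summable_on -F"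
      using D_summable y by (auto intro: summable_on_subset)
    have "(\<Sum>\<^sub>\<infinity>l\<in>-F. (D k l)\<^sup>2) \<le> (\<Sum>\<^sub>\<infinity>l. (D k l)\<^sup>2)"
      by (intro infsum_mono_neutral D_tail D_summable) auto
    with D_bounded[of k] have "(\<Sum>\<^sub>\<infinity>l\<in>-F. (D k l)\<^sup>2) \<le> B"
      by linarith
    have "\<bar>\<Sum>\<^sub>\<infinity>l\<in>-F. D k l * y l\<bar> \<le> t / 2 * (\<Sum>\<^sub>\<infinity>l\<in>-F. (D k l)\<^sup>2) + (\<Sum>\<^sub>\<infinity>l\<in>-F. (y l)\<^sup>2) / (2 * t)"
      by (rule abs_infsum_mult_le_weighted_squares[OF D_tail y_tail_summable \<open>t > 0\<close>])
    also have "\<dots> \<le> t / 2 * B + (t * \<epsilon> / 2) / (2 * t)"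
      using \<open>(\<Sum>\<^sub>\<infinity>l\<in>-F. (D k l)\<^sup>2) \<le> B\<close> y_tail \<open>t > 0\<close>
      by (intro add_mono mult_left_mono divide_right_mono) auto
    also have "\<dots> < \<epsilon> / 2"
      using tB \<open>t > 0\<close> by (simp add: field_simps)
    finally show ?thesis .
  qed
  have split: "(\<Sum>\<^sub>\<infinity>l. D k l * y l) = (\<Sum>l\<in>F. D k l * y l) + (\<Sum>\<^sub>\<infinity>l\<in>-F. D k l * y l)" for k
  proof -
    have "(\<lambda>l. D k l * y l) summable_on UNIV"
      by (rule summable_on_mult_square_summable[OF D_summable y])
    then have "(\<Sum>\<^sub>\<infinity>l\<in>F \<union> -F. D k l * y l) = (\<Sum>\<^sub>\<infinity>l\<in>F. D k l * y l) + (\<Sum>\<^sub>\<infinity>l\<in>-F. D k l * y l)"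
      by (intro infsum_Un_disjoint) (auto intro: summable_on_subset)
    then show ?thesis
      using \<open>finite F\<close> by simp
  qed
  show "\<exists>N. \<forall>k\<ge>N. norm ((\<Sum>\<^sub>\<infinity>l. D k l * y l) - 0) < \<epsilon>"
  proof (intro exI allI impI)
    fix k
    assume "k \<ge> N"
    show "norm ((\<Sum>\<^sub>\<infinity>l. D k l * y l) - 0) < \<epsilon>"
      using head[OF \<open>k \<ge> N\<close>] tail[of k] unfolding split by simp
  qed
qed

lemma weak_conv_l2_if_pointwise_bounded:
  fixes xs :: "nat \<Rightarrow> 'a \<Rightarrow> real"
  assumes pointwise: "\<And>l. (\<lambda>k. xs k l) \<longlonglongrightarrow> x l"
    and xs: "\<And>k. xs k \<in> l2" and bounded: "\<And>k. (\<Sum>\<^sub>\<infinity>l. (xs k l)\<^sup>2) \<le> B"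
    and x: "x \<in> l2"
  shows "weak_conv_l2 xs x"
  unfolding weak_conv_l2_def
proof
  fix y :: "'a \<Rightarrow> real"
  assume "y \<in> l2"
  define D where "D k l = xs k l - x l" for k l
  have xs_summable: "(\<lambda>l. (xs k l)\<^sup>2) summable_on UNIV" for k
    using xs by (simp add: l2_def)
  have x_summable: "(\<lambda>l. (x l)\<^sup>2) summable_on UNIV" and y_summable: "(\<lambda>l. (y l)\<^sup>2) summable_on UNIV"
    using x \<open>y \<in> l2\<close> by (simp_all add: l2_def)
  have "(\<lambda>k. \<Sum>\<^sub>\<infinity>l. D k l * y l) \<longlonglongrightarrow> 0"
  proof (rule infsum_mult_tendsto_zero[OF _ _ _ y_summable])
    show "(\<lambda>k. D k l) \<longlonglongrightarrow> 0" for l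
      unfolding D_def using tendsto_diff[OF pointwise[of l] tendsto_const[of "x l"]] by simp
    show "(\<lambda>l. (D k l)\<^sup>2) summable_on UNIV" for k
      unfolding D_def by (rule summable_on_diff_square[OF xs_summable x_summable])
    show "(\<Sum>\<^sub>\<infinity>l. (D k l)\<^sup>2) \<le> 2 * B + 2 * (\<Sum>\<^sub>\<infinity>l. (x l)\<^sup>2)" for k
      using infsum_diff_square_le[OF xs_summable x_summable, of k] bounded[of k] unfolding D_def by linarith
  qed
  moreover have "(\<Sum>\<^sub>\<infinity>l. D k l * y l) = l2_inner (xs k) y - l2_inner x y" for k
  proof -
    have "(\<lambda>l. - (x l * y l)) summable_on UNIV"
      using summable_on_mult_square_summable[OF x_summable y_summable] by (simp add: summable_on_uminus)
    have "(\<Sum>\<^sub>\<infinity>l. D k l * y l) = (\<Sum>\<^sub>\<infinity>l. xs k l * y l + - (x l * y l))"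
      unfolding D_def by (simp add: algebra_simps)
    also have "\<dots> = (\<Sum>\<^sub>\<infinity>l. xs k l * y l) + (\<Sum>\<^sub>\<infinity>l. - (x l * y l))"
      by (rule infsum_add[OF summable_on_mult_square_summable[OF xs_summable y_summable]]) fact
    finally show ?thesis
      unfolding l2_inner_def by (simp add: infsum_uminus)
  qed
  ultimately show "(\<lambda>k. l2_inner (xs k) y) \<longlonglongrightarrow> l2_inner x y"
    by (simp add: LIM_zero_iff)
qed

lemma M_op_M_pinv: "(\<And>l. \<kappa> l \<noteq> 0) \<Longrightarrow> M_op \<kappa> (M_pinv \<kappa> c) = c"
  unfolding M_op_def M_pinv_def by simp

lemma M_pinv_M_op: "(\<And>l. \<kappa> l \<noteq> 0) \<Longrightarrow> M_pinv \<kappa> (M_op \<kappa> v) = v"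
  unfolding M_op_def M_pinv_def by simp

lemma
  assumes "nonlinear_reg_filter \<phi>" and "\<alpha> > 0" and "\<kappa> > 0"
  shows nonlinear_reg_filter_mono: "mono (\<phi> \<alpha> \<kappa>)"
    and nonlinear_reg_filter_lipschitz: "\<forall>x y. \<bar>\<phi> \<alpha> \<kappa> x - \<phi> \<alpha> \<kappa> y\<bar> \<le> \<bar>x - y\<bar>"
    and nonlinear_reg_filter_zero: "\<phi> \<alpha> \<kappa> 0 = 0"
  using assms unfolding nonlinear_reg_filter_def by simp_all

lemma nonlinear_reg_filter_tendsto_id:
  "nonlinear_reg_filter \<phi> \<Longrightarrow> \<kappa> > 0 \<Longrightarrow> ((\<lambda>\<alpha>. \<phi> \<alpha> \<kappa> x) \<longlongrightarrow> x) (at_right 0)"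
  unfolding nonlinear_reg_filter_def by simp

lemma nonlinear_reg_filter_tendsto:
  assumes filt: "nonlinear_reg_filter \<phi>" and "\<kappa> > 0"
    and \<alpha>: "\<alpha> \<longlonglongrightarrow> 0" "\<And>k. \<alpha> k > 0" and c: "c \<longlonglongrightarrow> x"
  shows "(\<lambda>k. \<phi> (\<alpha> k) \<kappa> (c k)) \<longlonglongrightarrow> x"
proof -
  have "filterlim \<alpha> (at_right 0) sequentially"
    using \<alpha> by (intro tendsto_imp_filterlim_at_right) auto
  then have at_x: "(\<lambda>k. \<phi> (\<alpha> k) \<kappa> x) \<longlonglongrightarrow> x"
    by (rule filterlim_compose[OF nonlinear_reg_filter_tendsto_id[OF filt \<open>\<kappa> > 0\<close>]])
  have "\<forall>k. norm (\<phi> (\<alpha> k) \<kappa> (c k) - \<phi> (\<alpha> k) \<kappa> x) \<le> \<bar>c k - x\<bar>"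
    using nonlinear_reg_filter_lipschitz[OF filt \<alpha>(2) \<open>\<kappa> > 0\<close>] by simp
  moreover have "(\<lambda>k. \<bar>c k - x\<bar>) \<longlonglongrightarrow> 0"
    using c by (intro tendsto_rabs_zero LIM_zero)
  ultimately have "(\<lambda>k. \<phi> (\<alpha> k) \<kappa> (c k) - \<phi> (\<alpha> k) \<kappa> x) \<longlonglongrightarrow> 0"
    by (rule Lim_null_comparison[OF always_eventually])
  from tendsto_add[OF this at_x] show ?thesis
    by simp
qed

lemma filter_square_bound:
  fixes f :: "real \<Rightarrow> real"
  assumes lip: "\<forall>x y. \<bar>f x - f y\<bar> \<le> \<bar>x - y\<bar>" and "f 0 = 0"
    and small: "\<forall>x. \<bar>x\<bar> \<le> d * \<alpha> / \<kappa> \<longrightarrow> \<bar>f x\<bar> \<le> e * \<kappa> / sqrt \<alpha> * \<bar>x\<bar>"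
    and "\<kappa> > 0" "\<alpha> > 0" "d > 0"
  shows "(f g / \<kappa>)\<^sup>2 \<le> g\<^sup>2 * (e\<^sup>2 / \<alpha> + g\<^sup>2 / (d\<^sup>2 * \<alpha>\<^sup>2))"
proof (cases "\<bar>g\<bar> \<le> d * \<alpha> / \<kappa>")
  case True
  with small \<open>\<kappa> > 0\<close> have "\<bar>f g / \<kappa>\<bar> \<le> e / sqrt \<alpha> * \<bar>g\<bar>"
    by (simp add: field_simps)
  then have "(f g / \<kappa>)\<^sup>2 \<le> (e / sqrt \<alpha> * \<bar>g\<bar>)\<^sup>2"
    by (metis abs_ge_zero power2_abs power_mono)
  also have "\<dots> = g\<^sup>2 * (e\<^sup>2 / \<alpha>)"
    using \<open>\<alpha> > 0\<close> by (simp add: power_mult_distrib power_divide)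
  also have "\<dots> \<le> g\<^sup>2 * (e\<^sup>2 / \<alpha> + g\<^sup>2 / (d\<^sup>2 * \<alpha>\<^sup>2))"
    by (intro mult_left_mono) auto
  finally show ?thesis .
next
  case False
  then have "(d * \<alpha>)\<^sup>2 < (\<kappa> * \<bar>g\<bar>)\<^sup>2"
    using assms(4-6) by (intro power_strict_mono) (auto simp: field_simps)
  then have inverse_\<kappa>: "1 / \<kappa>\<^sup>2 < g\<^sup>2 / (d\<^sup>2 * \<alpha>\<^sup>2)"
    using assms(4-6) by (simp add: field_simps)
  have "(f g)\<^sup>2 \<le> g\<^sup>2"
    using lip[rule_format, of g 0] \<open>f 0 = 0\<close> by (simp add: abs_le_square_iff)
  then have "(f g)\<^sup>2 * (1 / \<kappa>\<^sup>2) \<le> g\<^sup>2 * (g\<^sup>2 / (d\<^sup>2 * \<alpha>\<^sup>2))"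
    using inverse_\<kappa> by (intro mult_mono) auto
  then have "(f g / \<kappa>)\<^sup>2 \<le> g\<^sup>2 * (g\<^sup>2 / (d\<^sup>2 * \<alpha>\<^sup>2))"
    by (simp add: power_divide)
  also have "\<dots> \<le> g\<^sup>2 * (e\<^sup>2 / \<alpha> + g\<^sup>2 / (d\<^sup>2 * \<alpha>\<^sup>2))"
    using \<open>\<alpha> > 0\<close> by (intro mult_left_mono) auto
  finally show ?thesis .
qed

lemma square_le_sum_squares_if_between:
  fixes x a b :: real
  assumes "b \<le> x" and "x \<le> a"
  shows "x\<^sup>2 \<le> a\<^sup>2 + b\<^sup>2"
proof (cases "x \<ge> 0")
  case True
  with \<open>x \<le> a\<close> have "x\<^sup>2 \<le> a\<^sup>2"
    by (intro power_mono)
  then show ?thesis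
    by (simp add: add_increasing2)
next
  case False
  with \<open>b \<le> x\<close> have "(- x)\<^sup>2 \<le> (- b)\<^sup>2"
    by (intro power_mono) auto
  then show ?thesis
    by (simp add: add_increasing)
qed

lemma filter_pointwise_bound:
  fixes f :: "real \<Rightarrow> real"
  assumes "mono f" and lip: "\<forall>x y. \<bar>f x - f y\<bar> \<le> \<bar>x - y\<bar>" and "f 0 = 0"
    and small: "\<forall>x. \<bar>x\<bar> \<le> d * \<alpha> / \<kappa> \<longrightarrow> \<bar>f x\<bar> \<le> e * \<kappa> / sqrt \<alpha> * \<bar>x\<bar>"
    and "\<kappa> > 0" "\<alpha> > 0" "d > 0"
    and close: "(x - y)\<^sup>2 \<le> \<delta>\<^sup>2"
  shows "(f x / \<kappa>)\<^sup>2 \<le> 8 * (x - y)\<^sup>2 * (e\<^sup>2 / \<alpha> + 4 * \<delta>\<^sup>2 / (d\<^sup>2 * \<alpha>\<^sup>2)) + 4 * (y / \<kappa>)\<^sup>2"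
proof -
  define h where "h = 2 * \<bar>x - y\<bar>"
  define K where "K = e\<^sup>2 / \<alpha> + 4 * \<delta>\<^sup>2 / (d\<^sup>2 * \<alpha>\<^sup>2)"
  have "K \<ge> 0"
    unfolding K_def using \<open>\<alpha> > 0\<close> by simp
  have at_h: "(f s / \<kappa>)\<^sup>2 \<le> 4 * (x - y)\<^sup>2 * K" if "s\<^sup>2 = 4 * (x - y)\<^sup>2" for s
  proof -
    have "(f s / \<kappa>)\<^sup>2 \<le> s\<^sup>2 * (e\<^sup>2 / \<alpha> + s\<^sup>2 / (d\<^sup>2 * \<alpha>\<^sup>2))"
      using filter_square_bound[OF lip \<open>f 0 = 0\<close> small assms(5-7)] .
    also have "\<dots> \<le> 4 * (x - y)\<^sup>2 * K"
      unfolding that K_def using close \<open>\<alpha> > 0\<close>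
      by (intro mult_left_mono add_left_mono divide_right_mono) auto
    finally show ?thesis .
  qed
  have "\<bar>x\<bar> \<le> h \<or> \<bar>x\<bar> \<le> 2 * \<bar>y\<bar>"
    using abs_triangle_ineq[of "x - y" y] unfolding h_def by (cases "\<bar>x - y\<bar> \<le> \<bar>y\<bar>") auto
  then show ?thesis
  proof
    assume "\<bar>x\<bar> \<le> h"
    then have "f (- h) \<le> f x" and "f x \<le> f h"
      by (auto intro: monoD[OF \<open>mono f\<close>])
    then have "(f x / \<kappa>)\<^sup>2 \<le> (f h / \<kappa>)\<^sup>2 + (f (- h) / \<kappa>)\<^sup>2"
      using square_le_sum_squares_if_between[of "f (- h) / \<kappa>" "f x / \<kappa>" "f h / \<kappa>"] \<open>\<kappa> > 0\<close>
      by (simp add: divide_right_mono)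
    also have "\<dots> \<le> 8 * (x - y)\<^sup>2 * K"
      using at_h[of h] at_h[of "- h"] unfolding h_def by (simp add: power_mult_distrib)
    finally show ?thesis
      unfolding K_def by (simp add: add_increasing2)
  next
    assume "\<bar>x\<bar> \<le> 2 * \<bar>y\<bar>"
    then have "x\<^sup>2 \<le> (2 * y)\<^sup>2"
      by (simp only: abs_le_square_iff[symmetric] abs_mult)
    moreover have "(f x)\<^sup>2 \<le> x\<^sup>2"
      using lip[rule_format, of x 0] \<open>f 0 = 0\<close> by (simp add: abs_le_square_iff)
    ultimately have "(f x / \<kappa>)\<^sup>2 \<le> 4 * (y / \<kappa>)\<^sup>2"
      by (simp add: power_divide power_mult_distrib divide_right_mono)
    with \<open>K \<ge> 0\<close> show ?thesis
      unfolding K_def by (simp add: add_increasing)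
  qed
qed

lemma
  fixes \<phi> :: "real \<Rightarrow> real \<Rightarrow> real \<Rightarrow> real" and \<kappa> c z :: "'a \<Rightarrow> real"
  assumes filt: "nonlinear_reg_filter \<phi>"
    and small: "\<forall>\<kappa>>0. \<forall>\<alpha>>0. \<forall>x. \<bar>x\<bar> \<le> d * \<alpha> / \<kappa> \<longrightarrow> \<bar>\<phi> \<alpha> \<kappa> x\<bar> \<le> e * \<kappa> / sqrt \<alpha> * \<bar>x\<bar>"
    and "d > 0" and \<kappa>: "\<forall>l. \<kappa> l > 0" and "\<alpha> > 0"
    and "c \<in> l2" and "z \<in> l2" and close: "l2_norm (\<lambda>l. z l - c l) \<le> \<delta>" and "\<delta>\<^sup>2 \<le> C * \<alpha>"
    and pinv_z: "M_pinv \<kappa> z \<in> l2"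
  shows pinv_Phi_op_l2: "M_pinv \<kappa> (Phi_op \<phi> \<alpha> \<kappa> c) \<in> l2"
    and pinv_Phi_op_infsum_square_le:
      "(\<Sum>\<^sub>\<infinity>l. (M_pinv \<kappa> (Phi_op \<phi> \<alpha> \<kappa> c) l)\<^sup>2)
         \<le> 8 * (e\<^sup>2 * C + 4 * C\<^sup>2 / d\<^sup>2) + 4 * (\<Sum>\<^sub>\<infinity>l. (M_pinv \<kappa> z l)\<^sup>2)"
proof -
  define K where "K = e\<^sup>2 / \<alpha> + 4 * \<delta>\<^sup>2 / (d\<^sup>2 * \<alpha>\<^sup>2)"
  define w where "w l = z l - c l" for l
  define x where "x = M_pinv \<kappa> (Phi_op \<phi> \<alpha> \<kappa> c)"
  have "w \<in> l2"
    unfolding w_def using l2_diff[OF \<open>z \<in> l2\<close> \<open>c \<in> l2\<close>] .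
  have close_w: "l2_norm w \<le> \<delta>"
    unfolding w_def using close .
  have w_summable: "(\<lambda>l. (w l)\<^sup>2) summable_on UNIV" and z_summable: "(\<lambda>l. (M_pinv \<kappa> z l)\<^sup>2) summable_on UNIV"
    using \<open>w \<in> l2\<close> pinv_z by (simp_all add: l2_def)
  have pointwise: "(x l)\<^sup>2 \<le> 8 * K * (w l)\<^sup>2 + 4 * (M_pinv \<kappa> z l)\<^sup>2" for l
  proof -
    have "(c l - z l)\<^sup>2 \<le> \<delta>\<^sup>2"
      using square_le_of_l2_norm_le[OF \<open>w \<in> l2\<close> close_w] unfolding w_def by (simp add: power2_commute)
    moreover have "\<kappa> l > 0"
      using \<kappa> by simp
    ultimately have "(\<phi> \<alpha> (\<kappa> l) (c l) / \<kappa> l)\<^sup>2 \<le> 8 * (c l - z l)\<^sup>2 * K + 4 * (z l / \<kappa> l)\<^sup>2"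
      unfolding K_def using \<open>\<alpha> > 0\<close> \<open>d > 0\<close> small
      by (intro filter_pointwise_bound nonlinear_reg_filter_mono[OF filt] nonlinear_reg_filter_lipschitz[OF filt]
          nonlinear_reg_filter_zero[OF filt]) auto
    then show ?thesis
      unfolding x_def w_def M_pinv_def Phi_op_def by (simp add: power2_commute mult_ac)
  qed
  have bound_summable: "(\<lambda>l. 8 * K * (w l)\<^sup>2 + 4 * (M_pinv \<kappa> z l)\<^sup>2) summable_on UNIV"
    by (intro summable_on_add summable_on_cmult_right w_summable z_summable)
  have "(\<lambda>l. (x l)\<^sup>2) summable_on UNIV"
    by (rule summable_on_real_bound[OF bound_summable]) (use pointwise in simp)
  then show "M_pinv \<kappa> (Phi_op \<phi> \<alpha> \<kappa> c) \<in> l2"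
    unfolding x_def l2_def by simp
  have "(\<Sum>\<^sub>\<infinity>l. (x l)\<^sup>2) \<le> (\<Sum>\<^sub>\<infinity>l. 8 * K * (w l)\<^sup>2 + 4 * (M_pinv \<kappa> z l)\<^sup>2)"
    using pointwise by (intro infsum_mono \<open>(\<lambda>l. (x l)\<^sup>2) summable_on UNIV\<close> bound_summable)
  also have "\<dots> = 8 * K * (\<Sum>\<^sub>\<infinity>l. (w l)\<^sup>2) + 4 * (\<Sum>\<^sub>\<infinity>l. (M_pinv \<kappa> z l)\<^sup>2)"
    using w_summable z_summable by (simp add: infsum_add summable_on_cmult_right infsum_cmult_right)
  also have "\<dots> \<le> 8 * (K * \<delta>\<^sup>2) + 4 * (\<Sum>\<^sub>\<infinity>l. (M_pinv \<kappa> z l)\<^sup>2)"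
  proof -
    have "K \<ge> 0"
      unfolding K_def using \<open>\<alpha> > 0\<close> by simp
    then have "8 * K * (\<Sum>\<^sub>\<infinity>l. (w l)\<^sup>2) \<le> 8 * K * \<delta>\<^sup>2"
      using infsum_square_le_of_l2_norm_le[OF \<open>w \<in> l2\<close> close_w] by (intro mult_left_mono) auto
    then show ?thesis
      by simp
  qed
  also have "K * \<delta>\<^sup>2 \<le> e\<^sup>2 * C + 4 * C\<^sup>2 / d\<^sup>2"
  proof -
    have ratio: "0 \<le> \<delta>\<^sup>2 / \<alpha>" "\<delta>\<^sup>2 / \<alpha> \<le> C"
      using \<open>\<delta>\<^sup>2 \<le> C * \<alpha>\<close> \<open>\<alpha> > 0\<close> by (simp_all add: divide_le_eq)
    have "K * \<delta>\<^sup>2 = e\<^sup>2 * (\<delta>\<^sup>2 / \<alpha>) + 4 * (\<delta>\<^sup>2 / \<alpha>)\<^sup>2 / d\<^sup>2"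
      unfolding K_def using \<open>\<alpha> > 0\<close> \<open>d > 0\<close> by (simp add: field_simps power2_eq_square)
    also have "\<dots> \<le> e\<^sup>2 * C + 4 * C\<^sup>2 / d\<^sup>2"
      using ratio by (intro add_mono mult_left_mono divide_right_mono power_mono) auto
    finally show ?thesis .
  qed
  finally show "(\<Sum>\<^sub>\<infinity>l. (M_pinv \<kappa> (Phi_op \<phi> \<alpha> \<kappa> c) l)\<^sup>2)
      \<le> 8 * (e\<^sup>2 * C + 4 * C\<^sup>2 / d\<^sup>2) + 4 * (\<Sum>\<^sub>\<infinity>l. (M_pinv \<kappa> z l)\<^sup>2)"
    unfolding x_def by simp
qed

theorem proposition4p9:
  fixes \<phi> :: "real \<Rightarrow> real \<Rightarrow> real \<Rightarrow> real"
    and \<kappa> :: "'a::countable \<Rightarrow> real"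
    and z :: "'a \<Rightarrow> real"
    and \<delta> \<alpha> :: "nat \<Rightarrow> real"
    and zk :: "nat \<Rightarrow> 'a \<Rightarrow> real"
    and C :: real
  assumes filt: "nonlinear_reg_filter \<phi>"
    and B: "assumption_B \<phi>"
    and kpos: "\<forall>l. 0 < \<kappa> l"
    and kbdd: "bdd_above (range \<kappa>)"
    and z_l2: "z \<in> l2"
    and z_ranM: "z \<in> M_op \<kappa> ` l2"
    and z_ranPhi: "\<exists>\<alpha>t>0. z \<in> Phi_op \<phi> \<alpha>t \<kappa> ` l2"
    and \<delta>pos: "\<forall>k. 0 < \<delta> k" and \<delta>lim: "\<delta> \<longlonglongrightarrow> 0"
    and \<alpha>pos: "\<forall>k. 0 < \<alpha> k" and \<alpha>lim: "\<alpha> \<longlonglongrightarrow> 0"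
    and Cpos: "C > 0"
    and \<delta>\<alpha>: "\<forall>k. (\<delta> k)\<^sup>2 \<le> C * \<alpha> k"
    and zk_l2: "\<forall>k. zk k \<in> l2"
    and zk_close: "\<forall>k. l2_norm (\<lambda>l. z l - zk k l) \<le> \<delta> k"
  shows "(\<forall>k. Phi_op \<phi> (\<alpha> k) \<kappa> (zk k) \<in> M_op \<kappa> ` l2) \<and>
         weak_conv_l2 (\<lambda>k. M_pinv \<kappa> (Phi_op \<phi> (\<alpha> k) \<kappa> (zk k))) (M_pinv \<kappa> z)"
proof -
  obtain d e where "d > 0"
    and small: "\<forall>\<kappa>>0. \<forall>\<alpha>>0. \<forall>x. \<bar>x\<bar> \<le> d * \<alpha> / \<kappa> \<longrightarrow> \<bar>\<phi> \<alpha> \<kappa> x\<bar> \<le> e * \<kappa> / sqrt \<alpha> * \<bar>x\<bar>"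
    using B unfolding assumption_B_def by blast
  have \<kappa>_nonzero: "\<And>l. \<kappa> l \<noteq> 0"
    using kpos by (metis less_irrefl)
  have "M_pinv \<kappa> z \<in> l2"
    using z_ranM M_pinv_M_op[of \<kappa>, OF \<kappa>_nonzero] by auto
  define xs where "xs k = M_pinv \<kappa> (Phi_op \<phi> (\<alpha> k) \<kappa> (zk k))" for k
  note bound_assms = filt small \<open>d > 0\<close> kpos \<alpha>pos[rule_format] zk_l2[rule_format] z_l2
    zk_close[rule_format] \<delta>\<alpha>[rule_format] \<open>M_pinv \<kappa> z \<in> l2\<close>
  have xs_l2: "xs k \<in> l2" for k
    unfolding xs_def by (rule pinv_Phi_op_l2[OF bound_assms])
  have xs_bounded:
      "(\<Sum>\<^sub>\<infinity>l. (xs k l)\<^sup>2) \<le> 8 * (e\<^sup>2 * C + 4 * C\<^sup>2 / d\<^sup>2) + 4 * (\<Sum>\<^sub>\<infinity>l. (M_pinv \<kappa> z l)\<^sup>2)" for k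
    unfolding xs_def by (rule pinv_Phi_op_infsum_square_le[OF bound_assms])
  have "(\<lambda>k. zk k l) \<longlonglongrightarrow> z l" for l
    using z_l2 zk_l2 zk_close \<delta>lim by (intro l2_norm_diff_tendsto_imp_pointwise) auto
  then have "(\<lambda>k. xs k l) \<longlonglongrightarrow> M_pinv \<kappa> z l" for l
    unfolding xs_def M_pinv_def Phi_op_def
    using kpos \<alpha>lim \<alpha>pos \<kappa>_nonzero by (intro tendsto_divide nonlinear_reg_filter_tendsto[OF filt]) auto
  then have "weak_conv_l2 xs (M_pinv \<kappa> z)"
    using xs_l2 xs_bounded \<open>M_pinv \<kappa> z \<in> l2\<close> by (rule weak_conv_l2_if_pointwise_bounded)
  moreover have "Phi_op \<phi> (\<alpha> k) \<kappa> (zk k) \<in> M_op \<kappa> ` l2" for k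
    using xs_l2[of k] M_op_M_pinv[of \<kappa>, OF \<kappa>_nonzero] unfolding xs_def by (metis image_eqI)
  ultimately show ?thesis
    unfolding xs_def by blast
qed

end
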